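(* Let $S$ be a semiring and $\Sigma$ an alphabet. The set $\mathrm{Rev}(S,\Sigma)$ is closed under addition and under both left and right scalar multiplication: if $r,s\in\mathrm{Rev}(S,\Sigma)$ and $\alpha\in S$, then $r+s$, $\alpha r$ and $r\alpha$ belong to $\mathrm{Rev}(S,\Sigma)$, where $(\alpha r,w)=\alpha\,(r,w)$ and $(r\alpha,w)=(r,w)\,\alpha$ for all $w\in\Sigma^*$.
   Context: A semiring $(S,+,\cdot,0,1)$ has $(S,+,0)$ a commutative monoid, $(S,\cdot,1)$ a monoid, $\cdot$ distributing over $+$ on both sides and $0$ absorbing. A formal power series over $S$ and a finite nonempty alphabet $\Sigma$ is a map $r\colon \Sigma^*\to S$, with value $(r,w)$ at $w$; addition is pointwise. A weighted automaton over $S$ and $\Sigma$ is $\mathcal{A}=(Q,\sigma,\iota,\tau)$ with $Q$ finite, $\sigma\colon Q\times\Sigma\times Q\to S$, $\iota,\tau\colon Q\to S$. A run on $w=a_1\cdots a_t$ is $q_0a_1q_1\cdots a_tq_t$ with all $\sigma(q_{k-1},a_k,q_k)\neq0$; its weight is $\iota(q_0)\sigma(q_0,a_1,q_1)\cdots\sigma(q_{t-1},a_t,q_t)\tau(q_t)$, and $(\|\mathcal{A}\|,w)$ is the sum of weights of all runs on $w$. $\mathcal{A}$ is reversible if for all $p,p',q,q'\in Q$, $a\in\Sigma$: (i) $\sigma(p,a,q)\neq0\neq\sigma(p,a,q')$ implies $q=q'$; (ii) $\sigma(p,a,q)\neq0\neq\sigma(p',a,q)$ implies $p=p'$. $\mathrm{Rev}(S,\Sigma)$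 is the set of series realised by reversible weighted automata over $S$ and $\Sigma$. *)

theory Defs
  imports Main
begin

text \<open>A weighted automaton over the semiring 's and the alphabet \<Sigma> (a finite nonempty
set of letters of type 'a): a finite set of states Q (states are natural numbers; every finite
state set is in bijection with such a set), transition weights sigma, initial weights iota,
final weights tau.  Values of sigma, iota, tau outside Q resp. \<Sigma> are irrelevant.\<close>

record ('a, 's) wa =
  states :: "nat set"
  trans  :: "nat \<Rightarrow> 'a \<Rightarrow> nat \<Rightarrow> 's"
  init   :: "nat \<Rightarrow> 's"
  fin    :: "nat \<Rightarrow> 's"

definition runs :: "('a, 's::zero) wa \<Rightarrow> 'a list \<Rightarrow> nat list set" where
  "runs A w = {qs. length qs = Suc (length w) \<and> set qs \<subseteq> states A \<and>
      (\<forall>k < length w. trans A (qs ! k) (w ! k) (qs ! Suc k) \<noteq> 0)}"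

definition run_weight :: "('a, 's::monoid_mult) wa \<Rightarrow> 'a list \<Rightarrow> nat list \<Rightarrow> 's" where
  "run_weight A w qs = init A (qs ! 0) *
      prod_list (map (\<lambda>k. trans A (qs ! k) (w ! k) (qs ! Suc k)) [0..<length w]) *
      fin A (qs ! length w)"

definition behaviour :: "('a, 's::{semiring_0,monoid_mult}) wa \<Rightarrow> 'a list \<Rightarrow> 's" where
  "behaviour A w = (\<Sum>qs\<in>runs A w. run_weight A w qs)"

definition reversible :: "('a, 's::zero) wa \<Rightarrow> 'a set \<Rightarrow> bool" where
  "reversible A \<Sigma> \<longleftrightarrow>
     (\<forall>p\<in>states A. \<forall>q\<in>states A. \<forall>q'\<in>states A. \<forall>a\<in>\<Sigma>.
        trans A p a q \<noteq> 0 \<and> trans A p a q' \<noteq> 0 \<longrightarrow> q = q') \<and>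
     (\<forall>p\<in>states A. \<forall>p'\<in>states A. \<forall>q\<in>states A. \<forall>a\<in>\<Sigma>.
        trans A p a q \<noteq> 0 \<and> trans A p' a q \<noteq> 0 \<longrightarrow> p = p')"

text \<open>Formal power series are maps from words to 's; only their values on \<Sigma>^* matter,
so two series are identified when they agree on lists \<Sigma>.  Rev(S, \<Sigma>):\<close>
definition Rev :: "'a set \<Rightarrow> ('a list \<Rightarrow> 's::{semiring_0,monoid_mult}) set" where
  "Rev \<Sigma> = {r. \<exists>A. finite (states A) \<and> reversible A \<Sigma> \<and>
                      (\<forall>w\<in>lists \<Sigma>. r w = behaviour A w)}"

end

theory Submission
  imports Defs
begin

text \<open>Scaling on the left (right) only multiplies the initial (final) weights, so the
transitions, and with them reversibility, are untouched.  For the sum, rename the states of the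
two automata apart (to even and odd numbers) and take their disjoint union: there are no
transitions between the two parts, so every run stays inside one of them, the runs of the union
are those of the two automata with unchanged weights, and reversibility can be checked in each
part separately.\<close>

lemma length_run: "qs \<in> runs A w \<Longrightarrow> length qs = Suc (length w)"
  by (simp add: runs_def)

lemma set_run_subset: "qs \<in> runs A w \<Longrightarrow> set qs \<subseteq> states A"
  by (simp add: runs_def)

lemma run_state_in_states: "qs \<in> runs A w \<Longrightarrow> k \<le> length w \<Longrightarrow> qs ! k \<in> states A"
  unfolding runs_def by (auto intro: nth_mem)

lemma finite_runs: "finite (states A) \<Longrightarrow> finite (runs A w)"
proof -
  assume "finite (states A)"
  then have "finite {qs. set qs \<subseteq> states A \<and> length qs = Suc (length w)}"
    by (rule finite_lists_length_eq)
  then show ?thesis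
    by (rule finite_subset[rotated]) (auto simp: runs_def)
qed

lemma reversible_det:
  "reversible A \<Sigma> \<Longrightarrow> p \<in> states A \<Longrightarrow> q \<in> states A \<Longrightarrow> q' \<in> states A \<Longrightarrow> a \<in> \<Sigma> \<Longrightarrow>
    trans A p a q \<noteq> 0 \<Longrightarrow> trans A p a q' \<noteq> 0 \<Longrightarrow> q = q'"
  unfolding reversible_def by blast

lemma reversible_codet:
  "reversible A \<Sigma> \<Longrightarrow> p \<in> states A \<Longrightarrow> p' \<in> states A \<Longrightarrow> q \<in> states A \<Longrightarrow> a \<in> \<Sigma> \<Longrightarrow>
    trans A p a q \<noteq> 0 \<Longrightarrow> trans A p' a q \<noteq> 0 \<Longrightarrow> p = p'"
  unfolding reversible_def by blast

lemma RevI: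
  "finite (states A) \<Longrightarrow> reversible A \<Sigma> \<Longrightarrow> (\<And>w. w \<in> lists \<Sigma> \<Longrightarrow> r w = behaviour A w) \<Longrightarrow>
    r \<in> Rev \<Sigma>"
  unfolding Rev_def by blast

text \<open>Off the image of \<open>f\<close> the weights are junk values of \<open>inv_into\<close>; this is harmless, as runs
and reversibility only involve states.\<close>

definition rename_wa :: "(nat \<Rightarrow> nat) \<Rightarrow> ('a, 's) wa \<Rightarrow> ('a, 's) wa" where
  "rename_wa f A = (let g = inv_into (states A) f in
     \<lparr>states = f ` states A, trans = (\<lambda>p a q. trans A (g p) a (g q)),
      init = init A \<circ> g, fin = fin A \<circ> g\<rparr>)"

lemma states_rename_wa [simp]: "states (rename_wa f A) = f ` states A"
  by (simp add: rename_wa_def Let_def)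

lemma runs_rename_wa:
  assumes "inj_on f (states A)"
  shows "runs (rename_wa f A) w = map f ` runs A w"
proof
  show "runs (rename_wa f A) w \<subseteq> map f ` runs A w"
  proof
    fix qs assume qs: "qs \<in> runs (rename_wa f A) w"
    then have "set qs \<subseteq> f ` states A"
      by (simp add: runs_def rename_wa_def Let_def)
    then have "qs = map f (map (inv_into (states A) f) qs)"
      and "set (map (inv_into (states A) f) qs) \<subseteq> states A"
      by (auto intro!: map_idI[symmetric] simp: f_inv_into_f inv_into_into)
    moreover have "map (inv_into (states A) f) qs \<in> runs A w"
      using qs calculation(2) by (auto simp: runs_def rename_wa_def Let_def)
    ultimately show "qs \<in> map f ` runs A w" by blast
  qed
  show "map f ` runs A w \<subseteq> runs (rename_wa f A) w"
  proof
    fix qs assume "qs \<in> map f ` runs A w"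
    then obtain ps where ps: "ps \<in> runs A w" and qs: "qs = map f ps" by blast
    have "inv_into (states A) f (f (ps ! k)) = ps ! k" if "k \<le> length w" for k
      using assms run_state_in_states[OF ps that] by simp
    then show "qs \<in> runs (rename_wa f A) w"
      using ps unfolding qs by (auto simp: runs_def rename_wa_def Let_def)
  qed
qed

lemma run_weight_rename_wa:
  assumes "inj_on f (states A)" and "qs \<in> runs A w"
  shows "run_weight (rename_wa f A) w (map f qs) = run_weight A w qs"
proof -
  let ?g = "inv_into (states A) f"
  have g: "?g (map f qs ! k) = qs ! k" if "k \<le> length w" for k
    using assms run_state_in_states[OF assms(2) that] length_run[OF assms(2)] that by simp
  have trans_eq: "map (\<lambda>k. trans (rename_wa f A) (map f qs ! k) (w ! k) (map f qs ! Suc k)) [0..<length w]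
      = map (\<lambda>k. trans A (qs ! k) (w ! k) (qs ! Suc k)) [0..<length w]"
    by (rule map_cong) (simp_all add: rename_wa_def Let_def g)
  show ?thesis
    unfolding run_weight_def trans_eq using g[of 0] g[of "length w"] by (simp add: rename_wa_def Let_def)
qed

lemma behaviour_rename_wa:
  assumes "inj_on f (states A)"
  shows "behaviour (rename_wa f A) w = behaviour A w"
proof -
  have "inj_on (map f) (runs A w)"
  proof (rule inj_onI)
    fix ps qs assume "ps \<in> runs A w" "qs \<in> runs A w" and eq: "map f ps = map f qs"
    then have "inj_on f (set ps \<union> set qs)"
      using assms by (rule_tac inj_on_subset) (auto simp: runs_def)
    with eq show "ps = qs" by (rule map_inj_on)
  qed
  then show ?thesis
    unfolding behaviour_def runs_rename_wa[OF assms]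
    by (simp add: sum.reindex run_weight_rename_wa[OF assms])
qed

lemma reversible_rename_wa:
  assumes "inj_on f (states A)" and "reversible A \<Sigma>"
  shows "reversible (rename_wa f A) \<Sigma>"
proof -
  have g: "inv_into (states A) f (f p) = p" if "p \<in> states A" for p
    using assms(1) that by simp
  have "\<forall>p\<in>states A. \<forall>q\<in>states A. \<forall>q'\<in>states A. \<forall>a\<in>\<Sigma>.
          trans A p a q \<noteq> 0 \<and> trans A p a q' \<noteq> 0 \<longrightarrow> f q = f q'"
    and "\<forall>p\<in>states A. \<forall>p'\<in>states A. \<forall>q\<in>states A. \<forall>a\<in>\<Sigma>.
          trans A p a q \<noteq> 0 \<and> trans A p' a q \<noteq> 0 \<longrightarrow> f p = f p'"
    using assms(2) unfolding reversible_def by metis+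
  then show ?thesis
    unfolding reversible_def rename_wa_def Let_def by (simp add: g)
qed

definition union_wa :: "('a, 's::zero) wa \<Rightarrow> ('a, 's) wa \<Rightarrow> ('a, 's) wa" where
  "union_wa A B = \<lparr>states = states A \<union> states B,
     trans = (\<lambda>p a q. if p \<in> states A \<and> q \<in> states A then trans A p a q
                      else if p \<in> states B \<and> q \<in> states B then trans B p a q else 0),
     init = (\<lambda>p. if p \<in> states A then init A p else init B p),
     fin = (\<lambda>p. if p \<in> states A then fin A p else fin B p)\<rparr>"

lemma states_union_wa [simp]: "states (union_wa A B) = states A \<union> states B"
  by (simp add: union_wa_def)

context
  fixes A B :: "('a, 's::{semiring_0,monoid_mult}) wa"
  assumes disjoint: "states A \<inter> states B = {}"
begin

lemma trans_union_wa_left: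
  "p \<in> states A \<Longrightarrow> q \<in> states A \<Longrightarrow> trans (union_wa A B) p a q = trans A p a q"
  by (simp add: union_wa_def)

lemma trans_union_wa_right:
  "p \<in> states B \<Longrightarrow> q \<in> states B \<Longrightarrow> trans (union_wa A B) p a q = trans B p a q"
  using disjoint by (auto simp: union_wa_def)

lemma trans_union_wa_nonzero:
  "trans (union_wa A B) p a q \<noteq> 0 \<Longrightarrow>
    p \<in> states A \<and> q \<in> states A \<or> p \<in> states B \<and> q \<in> states B"
  by (auto simp: union_wa_def split: if_splits)

lemma set_run_union_wa:
  assumes qs: "qs \<in> runs (union_wa A B) w"
  shows "set qs \<subseteq> states A \<or> set qs \<subseteq> states B"
proof -
  have same_side: "qs ! k \<in> states A \<longleftrightarrow> qs ! 0 \<in> states A" if "k \<le> length w" for k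
    using that
  proof (induction k)
    case (Suc k)
    then have "trans (union_wa A B) (qs ! k) (w ! k) (qs ! Suc k) \<noteq> 0"
      using qs by (simp add: runs_def)
    with Suc disjoint show ?case
      by (auto dest: trans_union_wa_nonzero)
  qed simp
  have "x \<in> states A \<longleftrightarrow> qs ! 0 \<in> states A" if "x \<in> set qs" for x
  proof -
    obtain k where "k < length qs" "x = qs ! k"
      using \<open>x \<in> set qs\<close> by (auto simp: in_set_conv_nth)
    then show ?thesis
      using same_side[of k] length_run[OF qs] by simp
  qed
  moreover have "set qs \<subseteq> states A \<union> states B"
    using qs by (simp add: runs_def)
  ultimately show ?thesis
    by (cases "qs ! 0 \<in> states A") auto
qed

lemma runs_union_wa: "runs (union_wa A B) w = runs A w \<union> runs B w"
proof -
  have left: "qs \<in> runs (union_wa A B) w \<longleftrightarrow> qs \<in> runs A w" if "set qs \<subseteq> states A" for qs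
  proof -
    have "trans (union_wa A B) (qs ! k) a (qs ! Suc k) = trans A (qs ! k) a (qs ! Suc k)"
      if "Suc k < length qs" for k a
      using \<open>set qs \<subseteq> states A\<close> that by (simp add: trans_union_wa_left subsetD)
    then show ?thesis
      using that by (auto simp: runs_def)
  qed
  have right: "qs \<in> runs (union_wa A B) w \<longleftrightarrow> qs \<in> runs B w" if "set qs \<subseteq> states B" for qs
  proof -
    have "trans (union_wa A B) (qs ! k) a (qs ! Suc k) = trans B (qs ! k) a (qs ! Suc k)"
      if "Suc k < length qs" for k a
      using \<open>set qs \<subseteq> states B\<close> that by (simp add: trans_union_wa_right subsetD)
    then show ?thesis
      using that by (auto simp: runs_def)
  qed
  show ?thesis
  proof (intro set_eqI iffI)
    fix qs assume "qs \<in> runs (union_wa A B) w"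
    then show "qs \<in> runs A w \<union> runs B w"
      using set_run_union_wa left right by blast
  next
    fix qs assume "qs \<in> runs A w \<union> runs B w"
    then show "qs \<in> runs (union_wa A B) w"
      using left right set_run_subset by blast
  qed
qed

lemma run_weight_union_wa_left:
  assumes "qs \<in> runs A w"
  shows "run_weight (union_wa A B) w qs = run_weight A w qs"
proof -
  have in_A: "qs ! k \<in> states A" if "k \<le> length w" for k
    using run_state_in_states[OF assms that] .
  have trans_eq: "map (\<lambda>k. trans (union_wa A B) (qs ! k) (w ! k) (qs ! Suc k)) [0..<length w]
      = map (\<lambda>k. trans A (qs ! k) (w ! k) (qs ! Suc k)) [0..<length w]"
    by (rule map_cong) (simp_all add: trans_union_wa_left in_A)
  show ?thesis
    unfolding run_weight_def trans_eq using in_A[of 0] in_A[of "length w"]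
    by (simp add: union_wa_def)
qed

lemma run_weight_union_wa_right:
  assumes "qs \<in> runs B w"
  shows "run_weight (union_wa A B) w qs = run_weight B w qs"
proof -
  have in_B: "qs ! k \<in> states B" if "k \<le> length w" for k
    using run_state_in_states[OF assms that] .
  have trans_eq: "map (\<lambda>k. trans (union_wa A B) (qs ! k) (w ! k) (qs ! Suc k)) [0..<length w]
      = map (\<lambda>k. trans B (qs ! k) (w ! k) (qs ! Suc k)) [0..<length w]"
    by (rule map_cong) (simp_all add: trans_union_wa_right in_B)
  show ?thesis
    unfolding run_weight_def trans_eq using in_B[of 0] in_B[of "length w"] disjoint
    by (auto simp: union_wa_def)
qed

lemma behaviour_union_wa:
  assumes "finite (states A)" and "finite (states B)"
  shows "behaviour (union_wa A B) w = behaviour A w + behaviour B w"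
proof -
  have "runs A w \<inter> runs B w = {}"
    using disjoint run_state_in_states[of _ A w 0] run_state_in_states[of _ B w 0] by blast
  then have "behaviour (union_wa A B) w
      = (\<Sum>qs\<in>runs A w. run_weight (union_wa A B) w qs) + (\<Sum>qs\<in>runs B w. run_weight (union_wa A B) w qs)"
    unfolding behaviour_def runs_union_wa
    by (simp add: sum.union_disjoint finite_runs assms)
  also have "\<dots> = behaviour A w + behaviour B w"
    unfolding behaviour_def
    by (simp add: run_weight_union_wa_left run_weight_union_wa_right)
  finally show ?thesis .
qed

lemma reversible_union_wa:
  assumes "reversible A \<Sigma>" and "reversible B \<Sigma>"
  shows "reversible (union_wa A B) \<Sigma>"
  unfolding reversible_def
proof (intro conjI ballI impI)
  fix p q q' a
  assume "a \<in> \<Sigma>" and nz: "trans (union_wa A B) p a q \<noteq> 0 \<and> trans (union_wa A B) p a q' \<noteq> 0"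
  then consider "p \<in> states A" "q \<in> states A" "q' \<in> states A"
    | "p \<in> states B" "q \<in> states B" "q' \<in> states B"
    using disjoint trans_union_wa_nonzero by blast
  then show "q = q'"
    using \<open>a \<in> \<Sigma>\<close> nz
    by cases (simp_all add: trans_union_wa_left trans_union_wa_right
        reversible_det[OF assms(1)] reversible_det[OF assms(2)])
next
  fix p p' q a
  assume "a \<in> \<Sigma>" and nz: "trans (union_wa A B) p a q \<noteq> 0 \<and> trans (union_wa A B) p' a q \<noteq> 0"
  then consider "p \<in> states A" "p' \<in> states A" "q \<in> states A"
    | "p \<in> states B" "p' \<in> states B" "q \<in> states B"
    using disjoint trans_union_wa_nonzero by blast
  then show "p = p'"
    using \<open>a \<in> \<Sigma>\<close> nz
    by cases (simp_all add: trans_union_wa_left trans_union_wa_right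
        reversible_codet[OF assms(1)] reversible_codet[OF assms(2)])
qed

end

lemma Rev_add:
  assumes "r \<in> Rev \<Sigma>" and "s \<in> Rev \<Sigma>"
  shows "(\<lambda>w. r w + s w) \<in> Rev \<Sigma>"
proof -
  obtain A where A: "finite (states A)" "reversible A \<Sigma>" "\<forall>w\<in>lists \<Sigma>. r w = behaviour A w"
    using assms(1) unfolding Rev_def by blast
  obtain B where B: "finite (states B)" "reversible B \<Sigma>" "\<forall>w\<in>lists \<Sigma>. s w = behaviour B w"
    using assms(2) unfolding Rev_def by blast
  let ?A = "rename_wa (\<lambda>q. 2 * q) A" and ?B = "rename_wa (\<lambda>q. 2 * q + 1) B"
  have inj: "inj_on (\<lambda>q. 2 * q) (states A)" "inj_on (\<lambda>q. 2 * q + 1) (states B)"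
    by (simp_all add: inj_on_def)
  have disjoint: "states ?A \<inter> states ?B = {}"
    by auto presburger
  show ?thesis
  proof (rule RevI)
    show "finite (states (union_wa ?A ?B))"
      using A(1) B(1) by simp
    show "reversible (union_wa ?A ?B) \<Sigma>"
      using disjoint A(2) B(2) inj by (simp add: reversible_union_wa reversible_rename_wa)
    show "r w + s w = behaviour (union_wa ?A ?B) w" if "w \<in> lists \<Sigma>" for w
      using disjoint A B inj that by (simp add: behaviour_union_wa behaviour_rename_wa)
  qed
qed

lemma reversible_init_update [simp]: "reversible (A\<lparr>init := i\<rparr>) \<Sigma> = reversible A \<Sigma>"
  by (simp add: reversible_def)

lemma reversible_fin_update [simp]: "reversible (A\<lparr>fin := f\<rparr>) \<Sigma> = reversible A \<Sigma>"
  by (simp add: reversible_def)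

lemma behaviour_scale_init:
  "behaviour (A\<lparr>init := (\<lambda>q. \<alpha> * init A q)\<rparr>) w = \<alpha> * behaviour A w"
  by (simp add: behaviour_def run_weight_def runs_def sum_distrib_left mult.assoc)

lemma behaviour_scale_fin:
  "behaviour (A\<lparr>fin := (\<lambda>q. fin A q * \<alpha>)\<rparr>) w = behaviour A w * \<alpha>"
  by (simp add: behaviour_def run_weight_def runs_def sum_distrib_right mult.assoc)

lemma Rev_mult_left:
  assumes "r \<in> Rev \<Sigma>"
  shows "(\<lambda>w. \<alpha> * r w) \<in> Rev \<Sigma>"
proof -
  obtain A where "finite (states A)" "reversible A \<Sigma>" "\<forall>w\<in>lists \<Sigma>. r w = behaviour A w"
    using assms unfolding Rev_def by blast
  then show ?thesis
    by (intro RevI[of "A\<lparr>init := (\<lambda>q. \<alpha> * init A q)\<rparr>"]) (simp_all add: behaviour_scale_init)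
qed

lemma Rev_mult_right:
  assumes "r \<in> Rev \<Sigma>"
  shows "(\<lambda>w. r w * \<alpha>) \<in> Rev \<Sigma>"
proof -
  obtain A where "finite (states A)" "reversible A \<Sigma>" "\<forall>w\<in>lists \<Sigma>. r w = behaviour A w"
    using assms unfolding Rev_def by blast
  then show ?thesis
    by (intro RevI[of "A\<lparr>fin := (\<lambda>q. fin A q * \<alpha>)\<rparr>"]) (simp_all add: behaviour_scale_fin)
qed

theorem proposition2:
  fixes \<Sigma> :: "'a set" and r s :: "'a list \<Rightarrow> 's::{semiring_0,monoid_mult}" and \<alpha> :: 's
  assumes "finite \<Sigma>" and "\<Sigma> \<noteq> {}"
    and "r \<in> Rev \<Sigma>" and "s \<in> Rev \<Sigma>"
  shows "(\<lambda>w. r w + s w) \<in> Rev \<Sigma> \<and>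
         (\<lambda>w. \<alpha> * r w) \<in> Rev \<Sigma> \<and>
         (\<lambda>w. r w * \<alpha>) \<in> Rev \<Sigma>"
  using Rev_add[OF assms(3,4)] Rev_mult_left[OF assms(3)] Rev_mult_right[OF assms(3)] by blast

end
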